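(* In the model of the context, suppose $\tau+\rho(\gamma,\infty)\tau-\rho(\gamma,\infty)>0$. If the primary protection constraint $\Pr[\mathsf{SIR}_1<\gamma]\le\tau$ holds, then $\beta\ge\beta_{\min}$, where $$\beta_{\min}=\left(\frac{P_1^{2/\alpha}\rho_0(\gamma,\infty)(1-\tau)}{\pi d^2\left(\int_0^\infty\frac{du}{1+u^{\alpha/2}}\right)\lambda_1P_2^{2/\alpha}\left[\tau+\rho(\gamma,\infty)\tau-\rho(\gamma,\infty)\right]}\right)^{\alpha/2}.$$
   Context: Parameters: primary TX density $\lambda_1$, primary and secondary transmit powers $P_1,P_2$, secondary pair distance $d$, path-loss exponent $\alpha>2$, primary decoding threshold $\gamma>0$, tolerated primary outage $\tau\in(0,1)$, secondary decoding threshold $\beta>0$. Define $\rho_0(a,t)=a^{2/\alpha}\int_0^t\frac{du}{1+u^{\alpha/2}}$ and $\rho(a,t)=a^{2/\alpha}\int_{a^{-2/\alpha}}^{t}\frac{du}{1+u^{\alpha/2}}$. In the model, the active secondary TXs have density $\frac{1}{\pi d^2\rho_0(\beta,\infty)}$, and the SIR outage probability of a typical primary user is $$\Pr[\mathsf{SIR}_1<\gamma]=1-\frac{\lambda_1P_2^{2/\alpha}}{\frac{\rho_0(\gamma,\infty)P_1^{2/\alpha}}{\pi d^2\rho_0(\beta,\infty)}+\lambda_1P_2^{2/\alpha}\left(\rho(\gamma,\infty)+1\right)}.$$ *)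

theory Defs
  imports "HOL-Analysis.Analysis"
begin

definition rho0_inf :: "real \<Rightarrow> real \<Rightarrow> real" where
  "rho0_inf alpha a = a powr (2/alpha) * integral {0..} (\<lambda>u. 1 / (1 + u powr (alpha/2)))"

definition rho_inf :: "real \<Rightarrow> real \<Rightarrow> real" where
  "rho_inf alpha a = a powr (2/alpha) *
     integral {a powr (-2/alpha)..} (\<lambda>u. 1 / (1 + u powr (alpha/2)))"

definition primary_outage ::
  "real \<Rightarrow> real \<Rightarrow> real \<Rightarrow> real \<Rightarrow> real \<Rightarrow> real \<Rightarrow> real \<Rightarrow> real" where
  "primary_outage lambda1 P1 P2 d alpha gamma beta =
     1 - (lambda1 * P2 powr (2/alpha)) /
         (rho0_inf alpha gamma * P1 powr (2/alpha) / (pi * d^2 * rho0_inf alpha beta)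
          + lambda1 * P2 powr (2/alpha) * (rho_inf alpha gamma + 1))"

end

theory Submission
  imports Defs
begin

text \<open>With \<open>I\<close> the integral of \<open>1/(1 + u powr (alpha/2))\<close> over \<open>[0,\<infinity>)\<close>, the
  factor \<open>I\<close> cancels from \<open>rho0_inf alpha gamma / rho0_inf alpha beta\<close>, so the outage
  constraint becomes a linear inequality in \<open>beta powr (2/alpha)\<close>. Because
  \<open>tau + rho tau - rho > 0\<close> it solves to a lower bound on \<open>beta powr (2/alpha)\<close>, and
  raising both sides to the power \<open>alpha/2\<close> gives the bound on \<open>beta\<close>.\<close>

lemma integral_nonneg_unconditional:
  fixes f :: "'a::euclidean_space \<Rightarrow> real"
  assumes "\<And>x. x \<in> S \<Longrightarrow> 0 \<le> f x"
  shows "0 \<le> integral S f"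
proof (cases "f integrable_on S")
  case True
  then show ?thesis
    using assms by (rule integral_nonneg)
next
  case False
  then show ?thesis
    by (simp add: not_integrable_integral)
qed

lemma rho_inf_nonneg: "0 \<le> rho_inf alpha a"
  unfolding rho_inf_def by (intro mult_nonneg_nonneg integral_nonneg_unconditional) auto

lemma outage_le_iff:
  fixes X B R tau :: real
  assumes "0 < X + B * (R + 1)"
  shows "1 - B / (X + B * (R + 1)) \<le> tau \<longleftrightarrow> (1 - tau) * X \<le> B * (tau + R * tau - R)"
proof -
  have "1 - B / (X + B * (R + 1)) \<le> tau \<longleftrightarrow> (1 - tau) * (X + B * (R + 1)) \<le> B"
    using assms by (simp add: field_simps)
  also have "\<dots> \<longleftrightarrow> (1 - tau) * X \<le> B * (tau + R * tau - R)"
    by (simp add: algebra_simps)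
  finally show ?thesis .
qed

lemma le_powr_imp_powr_inverse_le:
  fixes c x p :: real
  assumes "0 \<le> c" "0 < x" "0 < p" "c \<le> x powr p"
  shows "c powr (1 / p) \<le> x"
proof -
  have "c powr (1 / p) \<le> (x powr p) powr (1 / p)"
    using assms by (intro powr_mono2) auto
  also have "\<dots> = x"
    using assms by (simp add: powr_powr)
  finally show ?thesis .
qed

lemma primary_outage_le_iff:
  fixes lambda1 P1 P2 d alpha gamma tau beta :: real
  defines "I \<equiv> integral {0..} (\<lambda>u. 1 / (1 + u powr (alpha/2)))"
    and "D \<equiv> tau + rho_inf alpha gamma * tau - rho_inf alpha gamma"
  assumes "lambda1 > 0" and "P1 > 0" and "P2 > 0" and "d > 0" and "gamma > 0" and "beta > 0"
    and "I \<noteq> 0" and "D > 0"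
  shows "primary_outage lambda1 P1 P2 d alpha gamma beta \<le> tau \<longleftrightarrow>
    (P1 powr (2/alpha) * rho0_inf alpha gamma * (1 - tau)) /
      (pi * d^2 * I * lambda1 * P2 powr (2/alpha) * D) \<le> beta powr (2/alpha)"
proof -
  define b where "b = beta powr (2/alpha)"
  define B where "B = lambda1 * P2 powr (2/alpha)"
  define K where "K = pi * d^2"
  define R where "R = rho_inf alpha gamma"
  define X where "X = gamma powr (2/alpha) * P1 powr (2/alpha) / (K * b)"
  have pos: "b > 0" "B > 0" "K > 0"
    using assms by (simp_all add: b_def B_def K_def)
  have "X > 0"
    using pos assms by (simp add: X_def)
  then have den: "0 < X + B * (R + 1)"
    using pos rho_inf_nonneg[of alpha gamma] by (simp add: R_def add_pos_nonneg)
  have outage: "primary_outage lambda1 P1 P2 d alpha gamma beta = 1 - B / (X + B * (R + 1))"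
    using \<open>I \<noteq> 0\<close> unfolding primary_outage_def rho0_inf_def
    by (simp add: I_def[symmetric] b_def[symmetric] B_def[symmetric] K_def[symmetric]
        R_def[symmetric] X_def mult_ac)
  have "(P1 powr (2/alpha) * rho0_inf alpha gamma * (1 - tau)) / (K * I * B * D)
      = (1 - tau) * (gamma powr (2/alpha) * P1 powr (2/alpha)) / (K * B * D)"
    using \<open>I \<noteq> 0\<close> by (simp add: rho0_inf_def I_def[symmetric] mult_ac)
  moreover have "(1 - tau) * X \<le> B * D \<longleftrightarrow>
      (1 - tau) * (gamma powr (2/alpha) * P1 powr (2/alpha)) / (K * B * D) \<le> b"
    using pos \<open>D > 0\<close> by (simp add: X_def field_simps)
  ultimately have "(1 - tau) * X \<le> B * D \<longleftrightarrow>
      (P1 powr (2/alpha) * rho0_inf alpha gamma * (1 - tau)) / (K * I * B * D) \<le> b"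
    by simp
  then show ?thesis
    unfolding outage outage_le_iff[OF den]
    by (simp add: D_def R_def B_def K_def b_def mult_ac)
qed

theorem lemma2:
  fixes lambda1 P1 P2 d alpha gamma tau beta :: real
  assumes "lambda1 > 0" and "P1 > 0" and "P2 > 0" and "d > 0" and "alpha > 2"
    and "gamma > 0" and "0 < tau" and "tau < 1" and "beta > 0"
    and "tau + rho_inf alpha gamma * tau - rho_inf alpha gamma > 0"
    and "primary_outage lambda1 P1 P2 d alpha gamma beta \<le> tau"
  shows "beta \<ge>
    ((P1 powr (2/alpha) * rho0_inf alpha gamma * (1 - tau)) /
     (pi * d^2 * integral {0..} (\<lambda>u. 1 / (1 + u powr (alpha/2))) * lambda1 * P2 powr (2/alpha)
      * (tau + rho_inf alpha gamma * tau - rho_inf alpha gamma))) powr (alpha/2)"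
proof (cases "integral {0..} (\<lambda>u. 1 / (1 + u powr (alpha/2))) = 0")
  case True
  \<comment> \<open>then \<open>rho0_inf alpha gamma = 0\<close> and the claimed bound is \<open>0\<close>\<close>
  then show ?thesis
    using assms by simp
next
  case False
  let ?c = "(P1 powr (2/alpha) * rho0_inf alpha gamma * (1 - tau)) /
     (pi * d^2 * integral {0..} (\<lambda>u. 1 / (1 + u powr (alpha/2))) * lambda1 * P2 powr (2/alpha)
      * (tau + rho_inf alpha gamma * tau - rho_inf alpha gamma))"
  have "?c \<le> beta powr (2/alpha)"
    using primary_outage_le_iff[OF assms(1-4,6,9) False assms(10)] assms(11) by blast
  moreover have "0 \<le> ?c"
    using assms by (simp add: rho0_inf_def integral_nonneg_unconditional)
  ultimately have "?c powr (1 / (2/alpha)) \<le> beta"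
    using assms by (intro le_powr_imp_powr_inverse_le) auto
  then show ?thesis
    by simp
qed

end
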